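(* Let $\mathbb{K}$ be a field, let $A\in\mathbb{K}[x]^{m\times n}$ have full rank $m\le n$, let $s\in\mathbb{Z}^n$, let $P\in\mathbb{K}[x]^{m\times n}$ be the $s$-Popov form of $A$, and let $\pi=\rho_s(A)$ be the $s$-pivot index of $P$. Then $A_{*,\pi}\in\mathbb{K}[x]^{m\times m}$ is nonsingular, $P_{*,\pi}$ is its $s_\pi$-Popov form, and $U=P_{*,\pi}A_{*,\pi}^{-1}\in\mathbb{K}[x]^{m\times m}$ is the unique unimodular matrix such that $UA=P$. Furthermore: (i) $\deg(P)\le\deg(A)+\mathrm{amp}(s)$; (ii) for $1\le i\le m$, the $i$th column of $U$ has degree at most $|\mathrm{rdeg}(A)|-\deg(A_{i,*})$; (iii) $\deg(U)\le|\mathrm{cdeg}(A_{*,\pi})|$; (iv) $\deg(P)\le\min(|\mathrm{rdeg}(A)|,|\mathrm{cdeg}(A')|)\le m\deg(A)$, where $A'$ is $A$ with its zero columns removed.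
   Context: For a tuple $t=(t_1,\dots,t_k)$, $|t|=t_1+\dots+t_k$ and $\mathrm{amp}(t)=\max(t)-\min(t)$. $\mathrm{rdeg}(M)$ and $\mathrm{cdeg}(M)$ are the tuples of row degrees and column degrees of $M$; $\deg(M)$ is the maximum degree of its entries; $A_{i,*}$ is the $i$th row, $A_{*,J}$ the submatrix of columns indexed by the tuple $J$, and $s_J$ the corresponding subtuple of $s$. A square polynomial matrix is unimodular if it has an inverse with polynomial entries. For a shift $s\in\mathbb{Z}^n$ and a nonzero row $p=[p_1,\dots,p_n]\in\mathbb{K}[x]^{1\times n}$, the $s$-degree is $\max_j(\deg(p_j)+s_j)$, the $s$-pivot index is the largest $j$ with $\deg(p_j)+s_j$ equal to the $s$-degree, and $p_j$ is the $s$-pivot entry. A matrix $P\in\mathbb{K}[x]^{k\times n}$ is in $s$-Popov form if it has no zero row, the $s$-pivot indices of its rows are strictly increasing, its $s$-pivot entries are monic, and in each column containing an $s$-pivot entry all other entries have degree strictly less than that $s$-pivot entry. The $s$-Popov form of a matrix $A$ of rank $r$ is the unique matrix in $\mathbb{K}[x]^{r\times n}$ in $s$-Popov form whose rows generate the same $\mathbb{K}[x]$-module as those of $A$; $\rho_s(A)$, the $s$-pivot support of $A$, is the tuple of $s$-pivot indices of the rows of this form. *)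

theory Defs
  imports "Jordan_Normal_Form.Determinant" "HOL-Computational_Algebra.Polynomial"
          "HOL-Library.Extended_Real"
begin

text \<open>Polynomial matrices are Jordan_Normal_Form matrices of type 'a poly mat
  (indices are 0-based). Degrees take values in ereal, with the degree of the
  zero polynomial (and the maximum over an empty set) equal to minus infinity.\<close>

definition pdeg :: "'a::zero poly \<Rightarrow> ereal" where
  "pdeg p = (if p = 0 then -\<infinity> else ereal (real (degree p)))"

definition vdeg :: "'a::zero poly vec \<Rightarrow> ereal" where
  "vdeg v = Sup {pdeg (v $ j) | j. j < dim_vec v}"

definition mdeg :: "'a::zero poly mat \<Rightarrow> ereal" where
  "mdeg M = Sup {pdeg (M $$ (i, j)) | i j. i < dim_row M \<and> j < dim_col M}"

definition sum_rdeg :: "'a::zero poly mat \<Rightarrow> ereal" where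
  "sum_rdeg M = (\<Sum>i<dim_row M. vdeg (row M i))"

definition sum_cdeg :: "'a::zero poly mat \<Rightarrow> ereal" where
  "sum_cdeg M = (\<Sum>j<dim_col M. vdeg (col M j))"

definition amp :: "nat \<Rightarrow> (nat \<Rightarrow> int) \<Rightarrow> int" where
  "amp n s = Max (s ` {..<n}) - Min (s ` {..<n})"

definition colsel :: "'a mat \<Rightarrow> nat list \<Rightarrow> 'a mat" where
  "colsel M J = mat (dim_row M) (length J) (\<lambda>(i, k). M $$ (i, J ! k))"

definition subshift :: "(nat \<Rightarrow> int) \<Rightarrow> nat list \<Rightarrow> nat \<Rightarrow> int" where
  "subshift s J = (\<lambda>k. s (J ! k))"

definition nonzero_cols :: "'a::zero mat \<Rightarrow> 'a mat" where
  "nonzero_cols M = colsel M (filter (\<lambda>j. col M j \<noteq> 0\<^sub>v (dim_row M)) [0..<dim_col M])"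

definition sdeg :: "(nat \<Rightarrow> int) \<Rightarrow> 'a::zero poly vec \<Rightarrow> ereal" where
  "sdeg s p = Sup {pdeg (p $ j) + ereal (real_of_int (s j)) | j. j < dim_vec p}"

definition spiv :: "(nat \<Rightarrow> int) \<Rightarrow> 'a::zero poly vec \<Rightarrow> nat" where
  "spiv s p = (GREATEST j. j < dim_vec p \<and> p $ j \<noteq> 0 \<and>
                  pdeg (p $ j) + ereal (real_of_int (s j)) = sdeg s p)"

definition is_popov :: "(nat \<Rightarrow> int) \<Rightarrow> 'a::{zero,one} poly mat \<Rightarrow> bool" where
  "is_popov s P \<longleftrightarrow>
     (\<forall>i < dim_row P. row P i \<noteq> 0\<^sub>v (dim_col P)) \<and>
     (\<forall>i i'. i < i' \<and> i' < dim_row P \<longrightarrow> spiv s (row P i) < spiv s (row P i')) \<and>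
     (\<forall>i < dim_row P. lead_coeff (P $$ (i, spiv s (row P i))) = 1) \<and>
     (\<forall>i < dim_row P. \<forall>i' < dim_row P. i' \<noteq> i \<longrightarrow>
        pdeg (P $$ (i', spiv s (row P i))) < pdeg (P $$ (i, spiv s (row P i))))"

definition rowmod :: "'a::comm_ring_1 poly mat \<Rightarrow> 'a poly vec set" where
  "rowmod M = {transpose_mat M *\<^sub>v v | v. v \<in> carrier_vec (dim_row M)}"

text \<open>full row rank: the rows are linearly independent (over K[x], equivalently K(x))\<close>
definition full_row_rank :: "'a::comm_ring_1 poly mat \<Rightarrow> bool" where
  "full_row_rank M \<longleftrightarrow> (\<forall>v \<in> carrier_vec (dim_row M).
      transpose_mat M *\<^sub>v v = 0\<^sub>v (dim_col M) \<longrightarrow> v = 0\<^sub>v (dim_row M))"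

definition is_popov_form_of :: "(nat \<Rightarrow> int) \<Rightarrow> 'a::comm_ring_1 poly mat \<Rightarrow> 'a poly mat \<Rightarrow> bool" where
  "is_popov_form_of s P M \<longleftrightarrow> P \<in> carrier_mat (dim_row M) (dim_col M) \<and>
      is_popov s P \<and> rowmod P = rowmod M"

definition pivots :: "(nat \<Rightarrow> int) \<Rightarrow> 'a::zero poly mat \<Rightarrow> nat list" where
  "pivots s P = map (\<lambda>i. spiv s (row P i)) [0..<dim_row P]"

definition unimodular :: "'a::comm_ring_1 poly mat \<Rightarrow> bool" where
  "unimodular U \<longleftrightarrow> (\<exists>V \<in> carrier_mat (dim_row U) (dim_row U).
      U \<in> carrier_mat (dim_row U) (dim_row U) \<and>
      U * V = 1\<^sub>m (dim_row U) \<and> V * U = 1\<^sub>m (dim_row U))"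

end

theory Submission
  imports Defs
begin

text \<open>Restricted to its pivot columns, an \<open>s\<close>-Popov form \<open>P\<close> is a square matrix whose diagonal
  entries strictly dominate their columns in degree, so \<open>det P\<^sub>\<pi>\<close> is nonzero of degree the sum of
  the pivot degrees. As \<open>P\<close> and \<open>A\<close> have the same row module, \<open>P = U A\<close> and \<open>A = V P\<close>; on the
  pivot columns this forces \<open>U V = V U = 1\<close>, so \<open>A\<^sub>\<pi>\<close> is nonsingular, \<open>U = P\<^sub>\<pi> A\<^sub>\<pi>\<^sup>-\<^sup>1\<close> is
  unique and \<open>P\<^sub>\<pi>\<close> is the \<open>s\<^sub>\<pi>\<close>-Popov form of \<open>A\<^sub>\<pi>\<close>. Bound (i) is the predictable degree
  property of \<open>P\<close> applied to the rows of \<open>A = V P\<close>. The other bounds come from Cramer's rule: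
  the entries of \<open>det A\<^sub>\<pi> \<cdot> U\<close> and \<open>det A\<^sub>\<pi> \<cdot> P\<close> are (sums of multiples of) determinants of
  \<open>A\<^sub>\<pi>\<close> with one row or column replaced, whose degrees are bounded row- or columnwise, while
  \<open>deg det A\<^sub>\<pi>\<close> equals the sum of the pivot degrees.\<close>

subsection \<open>Degrees of polynomial vectors and matrices\<close>

lemma pdeg_le_degree: "pdeg p \<le> ereal (real (degree p))"
  by (simp add: pdeg_def)

lemma pdeg_nonzero: "p \<noteq> 0 \<Longrightarrow> pdeg p = ereal (real (degree p))"
  by (simp add: pdeg_def)

lemma pdeg_0 [simp]: "pdeg 0 = -\<infinity>"
  by (simp add: pdeg_def)

text \<open>Unlike \<open>vdeg\<close>, which is \<open>-\<infinity>\<close> on the zero vector, \<open>vdegree\<close> is \<open>0\<close> there.\<close>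

definition vdegree :: "'a::zero poly vec \<Rightarrow> nat" where
  "vdegree v = Max (insert 0 ((\<lambda>j. degree (v $ j)) ` {..<dim_vec v}))"

lemma degree_le_vdegree: "j < dim_vec v \<Longrightarrow> degree (v $ j) \<le> vdegree v"
  unfolding vdegree_def by (rule Max_ge) auto

lemma vdeg_le_nat: "(\<And>j. j < dim_vec v \<Longrightarrow> degree (v $ j) \<le> k) \<Longrightarrow> vdeg v \<le> ereal (real k)"
  unfolding vdeg_def by (rule Sup_least) (auto intro: order_trans[OF pdeg_le_degree])

lemma vdeg_eq_vdegree:
  assumes "v \<noteq> 0\<^sub>v (dim_vec v)"
  shows "vdeg v = ereal (real (vdegree v))"
proof (rule antisym)
  show "vdeg v \<le> ereal (real (vdegree v))"
    by (rule vdeg_le_nat) (rule degree_le_vdegree)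
  obtain j0 where j0: "j0 < dim_vec v" "v $ j0 \<noteq> 0"
    using assms by (metis eq_vecI index_zero_vec(1,2))
  have upper: "pdeg (v $ j) \<le> vdeg v" if "j < dim_vec v" for j
    unfolding vdeg_def by (rule Sup_upper) (use that in auto)
  have "vdegree v \<in> insert 0 ((\<lambda>j. degree (v $ j)) ` {..<dim_vec v})"
    unfolding vdegree_def by (rule Max_in) auto
  then consider "vdegree v = 0" | j where "j < dim_vec v" "vdegree v = degree (v $ j)" "v $ j \<noteq> 0"
    by fastforce
  then show "ereal (real (vdegree v)) \<le> vdeg v"
  proof cases
    case 1
    have "ereal 0 \<le> pdeg (v $ j0)" using j0(2) by (simp add: pdeg_nonzero)
    with 1 upper[OF j0(1)] show ?thesis by simp
  next
    case 2
    then show ?thesis using upper[OF 2(1)] by (simp add: pdeg_nonzero)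
  qed
qed

lemma mdeg_upper: "i < dim_row M \<Longrightarrow> j < dim_col M \<Longrightarrow> pdeg (M $$ (i, j)) \<le> mdeg M"
  unfolding mdeg_def by (rule Sup_upper) auto

lemma mdeg_least:
  "(\<And>i j. i < dim_row M \<Longrightarrow> j < dim_col M \<Longrightarrow> pdeg (M $$ (i, j)) \<le> b) \<Longrightarrow> mdeg M \<le> b"
  unfolding mdeg_def by (rule Sup_least) auto

lemma mdeg_le_nat:
  "(\<And>i j. i < dim_row M \<Longrightarrow> j < dim_col M \<Longrightarrow> degree (M $$ (i, j)) \<le> k) \<Longrightarrow>
    mdeg M \<le> ereal (real k)"
  by (rule mdeg_least) (meson pdeg_le_degree ereal_less_eq(3) of_nat_le_iff order_trans)

lemma vdeg_row_le_mdeg: "i < dim_row M \<Longrightarrow> vdeg (row M i) \<le> mdeg M"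
  unfolding vdeg_def by (rule Sup_least) (auto intro: mdeg_upper)

lemma sum_rdeg_eq:
  assumes "A \<in> carrier_mat m n" and "\<And>i. i < m \<Longrightarrow> row A i \<noteq> 0\<^sub>v n"
  shows "sum_rdeg A = ereal (real (\<Sum>i<m. vdegree (row A i)))"
proof -
  have "sum_rdeg A = (\<Sum>i<m. ereal (real (vdegree (row A i))))"
    unfolding sum_rdeg_def using assms by (intro sum.cong) (auto intro: vdeg_eq_vdegree)
  then show ?thesis by (simp add: sum_ereal)
qed

lemma sum_cdeg_eq:
  assumes "A \<in> carrier_mat m n" and "\<And>j. j < n \<Longrightarrow> col A j \<noteq> 0\<^sub>v m"
  shows "sum_cdeg A = ereal (real (\<Sum>j<n. vdegree (col A j)))"
proof -
  have "sum_cdeg A = (\<Sum>j<n. ereal (real (vdegree (col A j))))"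
    unfolding sum_cdeg_def using assms by (intro sum.cong) (auto intro: vdeg_eq_vdegree)
  then show ?thesis by (simp add: sum_ereal)
qed

lemma sum_rdeg_le_mult_mdeg:
  assumes A: "A \<in> carrier_mat m n" and nz: "\<And>i. i < m \<Longrightarrow> row A i \<noteq> 0\<^sub>v n"
  shows "sum_rdeg A \<le> ereal (real m) * mdeg A"
proof (cases "m = 0")
  case True
  then show ?thesis using A by (simp add: sum_rdeg_def zero_ereal_def[symmetric])
next
  case False
  define a where "a = Max ((\<lambda>i. vdegree (row A i)) ` {..<m})"
  have "a \<in> (\<lambda>i. vdegree (row A i)) ` {..<m}"
    unfolding a_def using False by (intro Max_in) auto
  then obtain i0 where i0: "i0 < m" "a = vdegree (row A i0)" by auto
  have "ereal (real a) = vdeg (row A i0)"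
    using vdeg_eq_vdegree[of "row A i0"] nz[OF i0(1)] A i0 by simp
  also have "\<dots> \<le> mdeg A" using A i0 by (intro vdeg_row_le_mdeg) simp
  finally have a_le: "ereal (real a) \<le> mdeg A" .
  have "(\<Sum>i<m. vdegree (row A i)) \<le> m * a"
    using sum_mono[of "{..<m}" "\<lambda>i. vdegree (row A i)" "\<lambda>_. a"] by (simp add: a_def)
  then have "real (\<Sum>i<m. vdegree (row A i)) \<le> real m * real a"
    by (metis of_nat_le_iff of_nat_mult)
  then have "sum_rdeg A \<le> ereal (real m) * ereal (real a)"
    using sum_rdeg_eq[OF A nz] by (simp del: of_nat_sum)
  also have "\<dots> \<le> ereal (real m) * mdeg A"
    by (rule ereal_mult_left_mono[OF a_le]) simp
  finally show ?thesis .
qed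

subsection \<open>Shifted degrees and pivots\<close>

abbreviation shifted_degree :: "(nat \<Rightarrow> int) \<Rightarrow> 'a::zero poly vec \<Rightarrow> nat \<Rightarrow> int" where
  "shifted_degree s p j \<equiv> int (degree (p $ j)) + s j"

lemma pdeg_shift_eq:
  "p $ j \<noteq> 0 \<Longrightarrow> pdeg (p $ j) + ereal (real_of_int (s j)) = ereal (real_of_int (shifted_degree s p j))"
  by (simp add: pdeg_nonzero)

lemma sdeg_upper: "j < dim_vec p \<Longrightarrow> pdeg (p $ j) + ereal (real_of_int (s j)) \<le> sdeg s p"
  unfolding sdeg_def by (rule Sup_upper) auto

lemma sdeg_attained:
  assumes "p \<noteq> 0\<^sub>v (dim_vec p)"
  obtains j where "j < dim_vec p" "p $ j \<noteq> 0" "pdeg (p $ j) + ereal (real_of_int (s j)) = sdeg s p"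
proof -
  obtain j0 where j0: "j0 < dim_vec p" "p $ j0 \<noteq> 0"
    using assms by (metis eq_vecI index_zero_vec(1,2))
  let ?S = "{pdeg (p $ j) + ereal (real_of_int (s j)) | j. j < dim_vec p}"
  have "Sup ?S \<in> ?S"
    by (rule finite_Sup_in) (use j0 in \<open>auto simp: sup_max max_def\<close>)
  then obtain j where j: "j < dim_vec p" "pdeg (p $ j) + ereal (real_of_int (s j)) = sdeg s p"
    unfolding sdeg_def by auto
  have "sdeg s p \<noteq> -\<infinity>"
    using sdeg_upper[OF j0(1), of s] j0(2) by (auto simp: pdeg_nonzero)
  with j have "p $ j \<noteq> 0" by auto
  with j that show ?thesis by blast
qed

lemma
  assumes nz: "p \<noteq> 0\<^sub>v (dim_vec p)"
  shows spiv_less: "spiv s p < dim_vec p"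
    and spiv_nonzero: "p $ spiv s p \<noteq> 0"
    and shifted_degree_le_spiv:
      "\<And>j. j < dim_vec p \<Longrightarrow> p $ j \<noteq> 0 \<Longrightarrow> shifted_degree s p j \<le> shifted_degree s p (spiv s p)"
    and shifted_degree_less_spiv:
      "\<And>j. j < dim_vec p \<Longrightarrow> spiv s p < j \<Longrightarrow> p $ j \<noteq> 0 \<Longrightarrow>
        shifted_degree s p j < shifted_degree s p (spiv s p)"
proof -
  let ?Q = "\<lambda>j. j < dim_vec p \<and> p $ j \<noteq> 0 \<and> pdeg (p $ j) + ereal (real_of_int (s j)) = sdeg s p"
  obtain j where j: "?Q j" using sdeg_attained[OF nz] by blast
  have bound: "\<And>y. ?Q y \<Longrightarrow> y \<le> dim_vec p" by auto
  have Q: "?Q (spiv s p)"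
    unfolding spiv_def by (rule GreatestI_nat[of ?Q, OF j bound])
  have greatest: "\<And>y. ?Q y \<Longrightarrow> y \<le> spiv s p"
    unfolding spiv_def by (rule Greatest_le_nat[of ?Q, OF _ bound])
  show "spiv s p < dim_vec p" "p $ spiv s p \<noteq> 0" using Q by auto
  have sdeg: "sdeg s p = ereal (real_of_int (shifted_degree s p (spiv s p)))"
    using Q pdeg_shift_eq[of p "spiv s p" s] by auto
  show le: "shifted_degree s p j \<le> shifted_degree s p (spiv s p)"
    if "j < dim_vec p" "p $ j \<noteq> 0" for j
    using sdeg_upper[OF that(1), of s] pdeg_shift_eq[OF that(2), of s] sdeg by simp
  show "shifted_degree s p j < shifted_degree s p (spiv s p)"
    if "j < dim_vec p" "spiv s p < j" "p $ j \<noteq> 0" for j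
  proof -
    have "\<not> ?Q j" using greatest that(2) by fastforce
    then have "shifted_degree s p j \<noteq> shifted_degree s p (spiv s p)"
      using that sdeg pdeg_shift_eq[OF that(3), of s] by auto
    then show ?thesis using le[OF that(1,3)] by simp
  qed
qed

lemma spiv_eqI:
  assumes j: "j < dim_vec p" "p $ j \<noteq> 0"
    and le: "\<And>i. i < dim_vec p \<Longrightarrow> p $ i \<noteq> 0 \<Longrightarrow> shifted_degree s p i \<le> shifted_degree s p j"
    and less: "\<And>i. i < dim_vec p \<Longrightarrow> j < i \<Longrightarrow> p $ i \<noteq> 0 \<Longrightarrow> shifted_degree s p i < shifted_degree s p j"
  shows "spiv s p = j"
proof -
  have sdeg: "sdeg s p = ereal (real_of_int (shifted_degree s p j))"
  proof (rule antisym)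
    show "sdeg s p \<le> ereal (real_of_int (shifted_degree s p j))"
      unfolding sdeg_def
    proof (rule Sup_least, clarify)
      fix i assume i: "i < dim_vec p"
      show "pdeg (p $ i) + ereal (real_of_int (s i)) \<le> ereal (real_of_int (shifted_degree s p j))"
      proof (cases "p $ i = 0")
        case False
        then show ?thesis using le[OF i False] pdeg_shift_eq[OF False, of s] by simp
      qed simp
    qed
    show "ereal (real_of_int (shifted_degree s p j)) \<le> sdeg s p"
      using sdeg_upper[OF j(1), of s] pdeg_shift_eq[OF j(2), of s] by simp
  qed
  show ?thesis
    unfolding spiv_def
  proof (rule Greatest_equality)
    show "j < dim_vec p \<and> p $ j \<noteq> 0 \<and> pdeg (p $ j) + ereal (real_of_int (s j)) = sdeg s p"
      using j sdeg pdeg_shift_eq[OF j(2), of s] by simp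
  next
    fix i
    assume "i < dim_vec p \<and> p $ i \<noteq> 0 \<and> pdeg (p $ i) + ereal (real_of_int (s i)) = sdeg s p"
    then show "i \<le> j"
      using less[of i] sdeg pdeg_shift_eq[of p i s] by (cases "i \<le> j") auto
  qed
qed

lemma diff_le_amp: "j < n \<Longrightarrow> j' < n \<Longrightarrow> s j - s j' \<le> amp n s"
  unfolding amp_def by (smt (verit) Max_ge Min_le finite_imageI finite_lessThan image_eqI lessThan_iff)

subsection \<open>Row modules and column selection\<close>

lemma row_in_rowmod:
  assumes "i < dim_row B"
  shows "row B i \<in> rowmod B"
proof -
  have "row B i = transpose_mat B *\<^sub>v unit_vec (dim_row B) i"
    by (rule eq_vecI) (use assms in \<open>auto simp: scalar_prod_right_unit\<close>)
  then show ?thesis unfolding rowmod_def by auto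
qed

lemma rowmod_subset_imp_factor:
  assumes B: "B \<in> carrier_mat k n" and C: "C \<in> carrier_mat m n" and sub: "rowmod B \<subseteq> rowmod C"
  obtains X where "X \<in> carrier_mat k m" "B = X * C"
proof -
  have "\<forall>i<k. \<exists>v. v \<in> carrier_vec m \<and> row B i = transpose_mat C *\<^sub>v v"
    using row_in_rowmod[of _ B] sub B C unfolding rowmod_def by fastforce
  then obtain f where f: "\<And>i. i < k \<Longrightarrow> f i \<in> carrier_vec m \<and> row B i = transpose_mat C *\<^sub>v f i"
    by metis
  define X where "X = mat k m (\<lambda>(i, l). f i $ l)"
  have "B = X * C"
  proof (rule eq_matI)
    fix i j assume "i < dim_row (X * C)" "j < dim_col (X * C)"
    then have i: "i < k" and j: "j < n" using C by (auto simp: X_def)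
    have "row X i = f i" using f[OF i] i by (auto simp: X_def)
    have "B $$ (i, j) = row B i $ j" using B i j by auto
    also have "\<dots> = col C j \<bullet> f i" using f[OF i] C j by simp
    also have "\<dots> = f i \<bullet> col C j"
      using f[OF i] C j by (metis carrier_vecI col_dim comm_scalar_prod carrier_matD(1))
    also have "\<dots> = (X * C) $$ (i, j)" using \<open>row X i = f i\<close> i j C by (simp add: X_def)
    finally show "B $$ (i, j) = (X * C) $$ (i, j)" .
  qed (use B C in \<open>auto simp: X_def\<close>)
  moreover have "X \<in> carrier_mat k m" by (simp add: X_def)
  ultimately show ?thesis using that by blast
qed

lemma rowmod_mult_subset:
  assumes X: "X \<in> carrier_mat k m" and C: "C \<in> carrier_mat m n"
  shows "rowmod (X * C) \<subseteq> rowmod C"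
proof
  fix w assume "w \<in> rowmod (X * C)"
  then obtain v where v: "v \<in> carrier_vec k" "w = transpose_mat (X * C) *\<^sub>v v"
    unfolding rowmod_def using X by auto
  have "transpose_mat (X * C) = transpose_mat C * transpose_mat X"
    using X C by (simp add: transpose_mult)
  then have "w = transpose_mat C *\<^sub>v (transpose_mat X *\<^sub>v v)"
    using v X C by (simp add: assoc_mult_mat_vec[of _ n m _ k])
  moreover have "transpose_mat X *\<^sub>v v \<in> carrier_vec (dim_row C)"
    using X C unfolding carrier_vec_def by simp
  ultimately show "w \<in> rowmod C" unfolding rowmod_def by auto
qed

lemma colsel_carrier [simp]: "colsel M J \<in> carrier_mat (dim_row M) (length J)"
  by (simp add: colsel_def)

lemma colsel_dim [simp]: "dim_row (colsel M J) = dim_row M" "dim_col (colsel M J) = length J"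
  by (simp_all add: colsel_def)

lemma colsel_index [simp]:
  "i < dim_row M \<Longrightarrow> k < length J \<Longrightarrow> colsel M J $$ (i, k) = M $$ (i, J ! k)"
  by (simp add: colsel_def)

lemma col_colsel: "k < length J \<Longrightarrow> J ! k < dim_col M \<Longrightarrow> col (colsel M J) k = col M (J ! k)"
  by (auto intro!: eq_vecI)

lemma colsel_mult:
  assumes X: "X \<in> carrier_mat k m" and C: "C \<in> carrier_mat m n" and J: "set J \<subseteq> {..<n}"
  shows "colsel (X * C) J = X * colsel C J"
proof (rule eq_matI)
  fix i l assume "i < dim_row (X * colsel C J)" "l < dim_col (X * colsel C J)"
  then have i: "i < k" and l: "l < length J" using X by auto
  have "J ! l < n" using J l nth_mem by blast
  then show "colsel (X * C) J $$ (i, l) = (X * colsel C J) $$ (i, l)"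
    using i l X C col_colsel[of l J C] by simp
qed (use X C in auto)

lemma mult_cancel_right_det:
  fixes M :: "'a::idom mat"
  assumes B: "B \<in> carrier_mat k m" and C: "C \<in> carrier_mat k m" and M: "M \<in> carrier_mat m m"
    and det: "det M \<noteq> 0" and eq: "B * M = C * M"
  shows "B = C"
proof -
  have "B * M * adj_mat M = C * M * adj_mat M" using eq by simp
  then have "B * (M * adj_mat M) = C * (M * adj_mat M)"
    using B C M adj_mat(1)[OF M] by (simp add: assoc_mult_mat[of _ k m _ m _ m])
  then have scaled: "det M \<cdot>\<^sub>m B = det M \<cdot>\<^sub>m C"
    using B C M adj_mat(2)[OF M]
    by (simp add: mult_smult_distrib[OF B one_carrier_mat] mult_smult_distrib[OF C one_carrier_mat])
  show ?thesis
  proof (rule eq_matI)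
    fix i j assume "i < dim_row C" "j < dim_col C"
    then have "(det M \<cdot>\<^sub>m B) $$ (i, j) = (det M \<cdot>\<^sub>m C) $$ (i, j)" using scaled by simp
    then show "B $$ (i, j) = C $$ (i, j)" using \<open>i < dim_row C\<close> \<open>j < dim_col C\<close> B C det by simp
  qed (use B C in auto)
qed

lemma sum_cdeg_nonzero_cols:
  assumes A: "A \<in> carrier_mat m n"
  shows "sum_cdeg (nonzero_cols A) = ereal (real (\<Sum>j | j < n \<and> col A j \<noteq> 0\<^sub>v m. vdegree (col A j)))"
proof -
  define J where "J = filter (\<lambda>j. col A j \<noteq> 0\<^sub>v m) [0..<n]"
  have nonzero: "nonzero_cols A = colsel A J" using A by (simp add: nonzero_cols_def J_def)
  have set_J: "set J = {j. j < n \<and> col A j \<noteq> 0\<^sub>v m}" by (auto simp: J_def)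
  have J_nth: "J ! k < n \<and> col A (J ! k) \<noteq> 0\<^sub>v m" if "k < length J" for k
    using set_J nth_mem[OF that] by blast
  have col_J: "col (colsel A J) k = col A (J ! k)" if "k < length J" for k
    by (rule col_colsel[OF that]) (use J_nth[OF that] A in simp)
  have "sum_cdeg (colsel A J) = ereal (real (\<Sum>k<length J. vdegree (col (colsel A J) k)))"
    by (rule sum_cdeg_eq[OF colsel_carrier]) (use A col_J J_nth in simp)
  also have "(\<Sum>k<length J. vdegree (col (colsel A J) k)) = (\<Sum>k<length J. vdegree (col A (J ! k)))"
    by (simp add: col_J)
  also have "\<dots> = (\<Sum>j\<in>set J. vdegree (col A j))"
    using sum.reindex[OF inj_on_nth[of J "{..<length J}"], of "\<lambda>j. vdegree (col A j)"]
    by (simp add: J_def lessThan_atLeast0 nth_image)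
  finally show ?thesis using nonzero set_J A by simp
qed

subsection \<open>Degrees of determinants\<close>

definition degree_below :: "nat \<Rightarrow> 'a::zero poly \<Rightarrow> bool" where
  "degree_below e q \<longleftrightarrow> q = 0 \<or> degree q < e"

lemma degree_below_0 [simp]: "degree_below e 0"
  by (simp add: degree_below_def)

lemma degree_below_add: "degree_below e p \<Longrightarrow> degree_below e q \<Longrightarrow> degree_below e (p + q)"
  unfolding degree_below_def
  by (metis add.right_neutral add_0 degree_add_le_max le_less_trans max_less_iff_conj)

lemma degree_below_sum:
  "finite S \<Longrightarrow> (\<And>x. x \<in> S \<Longrightarrow> degree_below e (f x)) \<Longrightarrow> degree_below e (sum f S)"
  by (induction S rule: finite_induct) (auto intro: degree_below_add)

lemma add_degree_below:
  fixes p :: "'a::comm_ring_1 poly"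
  assumes "p \<noteq> 0" "degree p = e" "degree_below e q"
  shows "p + q \<noteq> 0 \<and> degree (p + q) = e"
proof (cases "q = 0")
  case False
  with assms have less: "degree q < degree p" by (simp add: degree_below_def)
  then have "degree (p + q) = e" using assms degree_add_eq_left by metis
  moreover have "p + q \<noteq> 0"
  proof
    assume "p + q = 0"
    then have "q = - p" by (simp add: eq_neg_iff_add_eq_0 add.commute)
    then show False using less by simp
  qed
  ultimately show ?thesis by simp
qed (use assms in simp)

lemma degree_signof_mult [simp]:
  fixes x :: "'a::idom poly"
  shows "degree (signof p * x) = degree x"
  by (auto simp: sign_def)

lemma sum_permutes: "p permutes S \<Longrightarrow> (\<Sum>i\<in>S. g (p i)) = (\<Sum>i\<in>S. g i)"
  by (rule sum.reindex_bij_betw[OF permutes_imp_bij])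

lemma degree_det_le:
  fixes M :: "'a::idom poly mat"
  assumes M: "M \<in> carrier_mat n n"
    and entries: "\<And>i j. i < n \<Longrightarrow> j < n \<Longrightarrow> degree (M $$ (i, j)) \<le> f i j"
    and diagonals: "\<And>p. p permutes {0..<n} \<Longrightarrow> (\<Sum>i = 0..<n. f i (p i)) \<le> N"
  shows "degree (det M) \<le> N"
  unfolding det_def'[OF M]
proof (rule degree_sum_le)
  show "finite {p. p permutes {0..<n}}" by (simp add: finite_permutations)
  fix p assume "p \<in> {p. p permutes {0..<n}}"
  then have p: "p permutes {0..<n}" by simp
  have "degree (signof p * (\<Prod>i = 0..<n. M $$ (i, p i))) \<le> (\<Sum>i = 0..<n. degree (M $$ (i, p i)))"
    using degree_prod_sum_le[of "{0..<n}" "\<lambda>i. M $$ (i, p i)"] by (simp add: o_def)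
  also have "\<dots> \<le> (\<Sum>i = 0..<n. f i (p i))"
    by (rule sum_mono) (use entries p permutes_in_image in fastforce)
  also have "\<dots> \<le> N" by (rule diagonals[OF p])
  finally show "degree (signof p * (\<Prod>i = 0..<n. M $$ (i, p i))) \<le> N" .
qed

lemma degree_det_le_sum_cols:
  fixes M :: "'a::idom poly mat"
  assumes "M \<in> carrier_mat n n" and "\<And>i j. i < n \<Longrightarrow> j < n \<Longrightarrow> degree (M $$ (i, j)) \<le> c j"
  shows "degree (det M) \<le> (\<Sum>j = 0..<n. c j)"
proof (rule degree_det_le[where f = "\<lambda>_ j. c j", OF assms])
  fix p assume "p permutes {0..<n}"
  then show "(\<Sum>i = 0..<n. c (p i)) \<le> (\<Sum>j = 0..<n. c j)" by (simp add: sum_permutes[of p _ c])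
qed

lemma degree_below_leibniz_term:
  fixes Q :: "'a::idom poly mat"
  assumes diag: "\<And>k. k < n \<Longrightarrow> Q $$ (k, k) \<noteq> 0 \<and> degree (Q $$ (k, k)) = d k"
    and off: "\<And>i k. i < n \<Longrightarrow> k < n \<Longrightarrow> i \<noteq> k \<Longrightarrow> degree_below (d k) (Q $$ (i, k))"
    and p: "p permutes {0..<n}" and "p \<noteq> id"
  shows "degree_below (\<Sum>k = 0..<n. d k) (signof p * (\<Prod>i = 0..<n. Q $$ (i, p i)))"
proof (cases "\<exists>i<n. Q $$ (i, p i) = 0")
  case True
  then have "(\<Prod>i = 0..<n. Q $$ (i, p i)) = 0" by (intro prod_zero) auto
  then have zero: "signof p * (\<Prod>i = 0..<n. Q $$ (i, p i)) = 0" by (simp only: mult_zero_right)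
  show ?thesis by (subst zero) (rule degree_below_0)
next
  case False
  then have nz: "\<forall>i\<in>{0..<n}. Q $$ (i, p i) \<noteq> 0" by auto
  obtain i0 where i0: "p i0 \<noteq> i0" using \<open>p \<noteq> id\<close> by (meson eq_id_iff)
  then have "i0 < n" using p by (meson atLeastLessThan_iff permutes_not_in zero_le not_le)
  have p_less: "p i < n" if "i < n" for i
    using p that by (meson atLeastLessThan_iff permutes_in_image zero_le)
  have le: "degree (Q $$ (i, p i)) \<le> d (p i)" if "i \<in> {0..<n}" for i
    using that diag[of i] off[of i "p i"] nz p_less[of i]
    by (cases "p i = i") (auto simp: degree_below_def)
  have less: "degree (Q $$ (i0, p i0)) < d (p i0)"
    using off[of i0 "p i0"] nz i0 \<open>i0 < n\<close> p_less[OF \<open>i0 < n\<close>] by (auto simp: degree_below_def)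
  have "degree (signof p * (\<Prod>i = 0..<n. Q $$ (i, p i))) = (\<Sum>i = 0..<n. degree (Q $$ (i, p i)))"
    by (simp add: degree_prod_eq_sum_degree[OF nz])
  also have "\<dots> < (\<Sum>i = 0..<n. d (p i))"
    by (rule sum_strict_mono_ex1) (use le less \<open>i0 < n\<close> in auto)
  also have "\<dots> = (\<Sum>k = 0..<n. d k)"
    by (rule sum_permutes[OF p])
  finally show ?thesis by (simp add: degree_below_def)
qed

text \<open>The diagonal product is the unique term of top degree in the Leibniz expansion.\<close>

lemma det_diagonal_dominant:
  fixes Q :: "'a::idom poly mat"
  assumes Q: "Q \<in> carrier_mat n n"
    and diag: "\<And>k. k < n \<Longrightarrow> Q $$ (k, k) \<noteq> 0 \<and> degree (Q $$ (k, k)) = d k"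
    and off: "\<And>i k. i < n \<Longrightarrow> k < n \<Longrightarrow> i \<noteq> k \<Longrightarrow> degree_below (d k) (Q $$ (i, k))"
  shows "det Q \<noteq> 0 \<and> degree (det Q) = (\<Sum>k = 0..<n. d k)"
proof -
  let ?P = "{p. p permutes {0..<n}}"
  let ?t = "\<lambda>p. signof p * (\<Prod>i = 0..<n. Q $$ (i, p i)) :: 'a poly"
  have fin: "finite ?P" by (simp add: finite_permutations)
  have "det Q = ?t id + sum ?t (?P - {id})"
    unfolding det_def'[OF Q] by (rule sum.remove[OF fin]) (simp add: permutes_id)
  moreover have "?t id = (\<Prod>i = 0..<n. Q $$ (i, i))" by simp
  moreover have "(\<Prod>i = 0..<n. Q $$ (i, i)) \<noteq> 0" using diag by auto
  moreover have "degree (\<Prod>i = 0..<n. Q $$ (i, i)) = (\<Sum>k = 0..<n. d k)"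
    by (subst degree_prod_eq_sum_degree) (use diag in auto)
  moreover have "degree_below (\<Sum>k = 0..<n. d k) (sum ?t (?P - {id}))"
    using fin by (intro degree_below_sum degree_below_leibniz_term[OF diag off]) auto
  ultimately show ?thesis
    using add_degree_below[of "\<Prod>i = 0..<n. Q $$ (i, i)" "\<Sum>k = 0..<n. d k" "sum ?t (?P - {id})"]
    by simp
qed

lemma finite_obtain_last_maximizer:
  fixes g :: "nat \<Rightarrow> 'b::linorder"
  assumes "finite K" "K \<noteq> {}"
  obtains k where "k \<in> K" "\<And>k'. k' \<in> K \<Longrightarrow> g k' \<le> g k" "\<And>k'. k' \<in> K \<Longrightarrow> g k' = g k \<Longrightarrow> k' \<le> k"
proof -
  define K' where "K' = {k \<in> K. g k = Max (g ` K)}"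
  have "Max (g ` K) \<in> g ` K" using assms by (intro Max_in) auto
  then obtain k0 where "k0 \<in> K" "g k0 = Max (g ` K)" by (metis imageE)
  then have "finite K'" "K' \<noteq> {}" using assms by (auto simp: K'_def)
  then have last: "Max K' \<in> K" "g (Max K') = Max (g ` K)" using Max_in[of K'] by (auto simp: K'_def)
  show ?thesis
  proof (rule that[OF last(1)])
    show "g k' \<le> g (Max K')" if "k' \<in> K" for k'
      using that assms last(2) by simp
    show "k' \<le> Max K'" if "k' \<in> K" "g k' = g (Max K')" for k'
      using that last(2) \<open>finite K'\<close> by (simp add: K'_def)
  qed
qed

text \<open>Among the rows maximising \<open>deg u\<^sub>k\<close> plus the shifted degree
  of their pivot, take the last one: in its pivot column that row contributes a term of top shifted
  degree, and every other row contributes strictly less, by maximality or because its pivot lies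
  further left.\<close>

lemma predictable_degree:
  fixes P :: "'a::idom poly mat" and u :: "nat \<Rightarrow> 'a poly" and s :: "nat \<Rightarrow> int"
  assumes piv_less: "\<And>k. k < m \<Longrightarrow> piv k < n"
    and piv_nonzero: "\<And>k. k < m \<Longrightarrow> P $$ (k, piv k) \<noteq> 0"
    and le: "\<And>k j. k < m \<Longrightarrow> j < n \<Longrightarrow> P $$ (k, j) \<noteq> 0 \<Longrightarrow>
      int (degree (P $$ (k, j))) + s j \<le> int (degree (P $$ (k, piv k))) + s (piv k)"
    and less: "\<And>k j. k < m \<Longrightarrow> j < n \<Longrightarrow> piv k < j \<Longrightarrow> P $$ (k, j) \<noteq> 0 \<Longrightarrow>
      int (degree (P $$ (k, j))) + s j < int (degree (P $$ (k, piv k))) + s (piv k)"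
    and mono: "\<And>k k'. k < k' \<Longrightarrow> k' < m \<Longrightarrow> piv k < piv k'"
    and k0: "k0 < m" "u k0 \<noteq> 0"
  obtains j where "j < n" "(\<Sum>k<m. u k * P $$ (k, j)) \<noteq> 0"
    "int (degree (u k0)) + (int (degree (P $$ (k0, piv k0))) + s (piv k0))
       \<le> int (degree (\<Sum>k<m. u k * P $$ (k, j))) + s j"
proof -
  define t where "t k = int (degree (P $$ (k, piv k))) + s (piv k)" for k
  define g where "g k = int (degree (u k)) + t k" for k
  define K where "K = {k. k < m \<and> u k \<noteq> 0}"
  obtain ks where "ks \<in> K" and g_le: "\<And>k. k \<in> K \<Longrightarrow> g k \<le> g ks"
    and last: "\<And>k. k \<in> K \<Longrightarrow> g k = g ks \<Longrightarrow> k \<le> ks"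
    by (rule finite_obtain_last_maximizer[of K g]) (use k0 in \<open>auto simp: K_def\<close>)
  then have ks: "ks < m" "u ks \<noteq> 0" by (auto simp: K_def)
  define j where "j = piv ks"
  have "j < n" using piv_less[OF ks(1)] by (simp add: j_def)
  define e where "e = degree (u ks) + degree (P $$ (ks, j))"
  have top: "u ks * P $$ (ks, j) \<noteq> 0" "degree (u ks * P $$ (ks, j)) = e"
    using ks piv_nonzero[OF ks(1)] by (auto simp: j_def e_def degree_mult_eq)
  have e_g: "int e + s j = g ks" by (simp add: e_def g_def t_def j_def)
  have rest: "degree_below e (\<Sum>k\<in>{..<m} - {ks}. u k * P $$ (k, j))"
  proof (rule degree_below_sum)
    fix k assume k: "k \<in> {..<m} - {ks}"
    show "degree_below e (u k * P $$ (k, j))"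
    proof (cases "u k = 0 \<or> P $$ (k, j) = 0")
      case False
      then have "k \<in> K" using k by (auto simp: K_def)
      have "int (degree (u k)) + int (degree (P $$ (k, j))) + s j < g ks"
      proof (cases "g k = g ks")
        case True
        then have "piv k < j" using last[OF \<open>k \<in> K\<close>] k mono ks(1) by (simp add: j_def)
        then have "int (degree (P $$ (k, j))) + s j < t k"
          using less[of k j] k \<open>j < n\<close> False by (auto simp: t_def)
        with True show ?thesis by (simp add: g_def)
      next
        case False
        then have "g k < g ks" using g_le[OF \<open>k \<in> K\<close>] by simp
        moreover have "int (degree (P $$ (k, j))) + s j \<le> t k"
          using le[of k j] k \<open>j < n\<close> \<open>\<not> (u k = 0 \<or> P $$ (k, j) = 0)\<close> by (auto simp: t_def)
        ultimately show ?thesis by (simp add: g_def)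
      qed
      then have "degree (u k * P $$ (k, j)) < e" using False e_g by (simp add: degree_mult_eq)
      then show ?thesis by (simp add: degree_below_def)
    qed auto
  qed simp
  have "(\<Sum>k<m. u k * P $$ (k, j)) = u ks * P $$ (ks, j) + (\<Sum>k\<in>{..<m} - {ks}. u k * P $$ (k, j))"
    by (rule sum.remove) (use ks in auto)
  then have "(\<Sum>k<m. u k * P $$ (k, j)) \<noteq> 0 \<and> degree (\<Sum>k<m. u k * P $$ (k, j)) = e"
    using add_degree_below[OF top rest] by simp
  moreover have "g k0 \<le> g ks" using g_le k0 by (simp add: K_def)
  ultimately show ?thesis using that[of j] e_g \<open>j < n\<close> by (simp add: g_def t_def)
qed

subsection \<open>Cramer's rule\<close>

definition replace_row :: "nat \<Rightarrow> (nat \<Rightarrow> 'a) \<Rightarrow> 'a mat \<Rightarrow> 'a mat" where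
  "replace_row i v M = mat (dim_row M) (dim_col M) (\<lambda>(l, k). if l = i then v k else M $$ (l, k))"

definition replace_col :: "nat \<Rightarrow> (nat \<Rightarrow> 'a) \<Rightarrow> 'a mat \<Rightarrow> 'a mat" where
  "replace_col k w M = mat (dim_row M) (dim_col M) (\<lambda>(l, q). if q = k then w l else M $$ (l, q))"

lemma replace_row_carrier [simp]: "M \<in> carrier_mat m m \<Longrightarrow> replace_row i v M \<in> carrier_mat m m"
  by (simp add: replace_row_def)

lemma replace_col_carrier [simp]: "M \<in> carrier_mat m m \<Longrightarrow> replace_col k w M \<in> carrier_mat m m"
  by (simp add: replace_col_def)

lemma replace_row_index:
  "M \<in> carrier_mat m m \<Longrightarrow> l < m \<Longrightarrow> k < m \<Longrightarrow>
    replace_row i v M $$ (l, k) = (if l = i then v k else M $$ (l, k))"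
  by (simp add: replace_row_def)

lemma replace_col_index:
  "M \<in> carrier_mat m m \<Longrightarrow> l < m \<Longrightarrow> q < m \<Longrightarrow>
    replace_col k w M $$ (l, q) = (if q = k then w l else M $$ (l, q))"
  by (simp add: replace_col_def)

lemma sum_mult_adj_mat_eq_det_replace_row:
  fixes M :: "'a::comm_ring_1 mat"
  assumes M: "M \<in> carrier_mat m m" and i: "i < m"
  shows "(\<Sum>k<m. v k * adj_mat M $$ (k, i)) = det (replace_row i v M)"
proof -
  let ?B = "replace_row i v M"
  have "mat_delete ?B i k = mat_delete M i k" for k
    by (rule eq_matI) (use M in \<open>auto simp: mat_delete_def replace_row_def\<close>)
  then have cofactor: "cofactor ?B i k = cofactor M i k" for k
    by (simp add: cofactor_def)
  have "det ?B = (\<Sum>k<m. ?B $$ (i, k) * cofactor ?B i k)"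
    by (rule laplace_expansion_row[OF replace_row_carrier[OF M] i])
  also have "\<dots> = (\<Sum>k<m. v k * adj_mat M $$ (k, i))"
    using M i by (intro sum.cong) (simp_all add: cofactor replace_row_index adj_mat_def)
  finally show ?thesis by simp
qed

lemma sum_adj_mat_mult_eq_det_replace_col:
  fixes M :: "'a::comm_ring_1 mat"
  assumes M: "M \<in> carrier_mat m m" and k: "k < m"
  shows "(\<Sum>i<m. adj_mat M $$ (k, i) * w i) = det (replace_col k w M)"
proof -
  let ?C = "replace_col k w M"
  have "mat_delete ?C i k = mat_delete M i k" for i
    by (rule eq_matI) (use M in \<open>auto simp: mat_delete_def replace_col_def\<close>)
  then have cofactor: "cofactor ?C i k = cofactor M i k" for i
    by (simp add: cofactor_def)
  have "det ?C = (\<Sum>i<m. ?C $$ (i, k) * cofactor ?C i k)"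
    by (rule laplace_expansion_column[OF replace_col_carrier[OF M] k])
  also have "\<dots> = (\<Sum>i<m. adj_mat M $$ (k, i) * w i)"
    using M k by (intro sum.cong) (simp_all add: cofactor replace_col_index adj_mat_def mult.commute)
  finally show ?thesis by simp
qed

lemma det_smult_left_factor:
  fixes M :: "'a::comm_ring_1 mat"
  assumes U: "U \<in> carrier_mat m m" and M: "M \<in> carrier_mat m m" and UM: "U * M = Q"
  shows "det M \<cdot>\<^sub>m U = Q * adj_mat M"
proof -
  have "Q * adj_mat M = U * (M * adj_mat M)"
    using UM U M adj_mat(1)[OF M] by (auto simp: assoc_mult_mat[of _ m m _ m _ m])
  also have "\<dots> = det M \<cdot>\<^sub>m U"
    using U adj_mat(2)[OF M] by (simp add: mult_smult_distrib[OF U one_carrier_mat])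
  finally show ?thesis by simp
qed

lemma det_mult_left_factor_index:
  fixes M :: "'a::comm_ring_1 mat"
  assumes U: "U \<in> carrier_mat m m" and M: "M \<in> carrier_mat m m" and UM: "U * M = Q"
    and j: "j < m" and i: "i < m"
  shows "det M * U $$ (j, i) = det (replace_row i (\<lambda>k. Q $$ (j, k)) M)"
proof -
  have "det M * U $$ (j, i) = (Q * adj_mat M) $$ (j, i)"
    using det_smult_left_factor[OF U M UM] U j i by (metis index_smult_mat(1) carrier_matD)
  also have "\<dots> = (\<Sum>k<m. Q $$ (j, k) * adj_mat M $$ (k, i))"
    using UM U M adj_mat(1)[OF M] j i by (auto simp: scalar_prod_def atLeast0LessThan)
  finally show ?thesis using sum_mult_adj_mat_eq_det_replace_row[OF M i] by simp
qed

lemma det_mult_product_index: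
  fixes M :: "'a::comm_ring_1 mat"
  assumes U: "U \<in> carrier_mat m m" and M: "M \<in> carrier_mat m m" and UM: "U * M = Q"
    and A: "A \<in> carrier_mat m n" and j: "j < m" and c: "c < n"
  shows "det M * (U * A) $$ (j, c) = (\<Sum>k<m. Q $$ (j, k) * det (replace_col k (\<lambda>l. A $$ (l, c)) M))"
proof -
  have Q: "Q \<in> carrier_mat m m" using UM U M by auto
  have "det M \<cdot>\<^sub>m (U * A) = Q * (adj_mat M * A)"
    using det_smult_left_factor[OF U M UM] U A Q adj_mat(1)[OF M]
    by (metis assoc_mult_mat mult_smult_assoc_mat)
  then have "det M * (U * A) $$ (j, c) = (Q * (adj_mat M * A)) $$ (j, c)"
    using U A j c by (metis index_smult_mat(1) index_mult_mat(2,3) carrier_matD)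
  also have "\<dots> = (\<Sum>k<m. Q $$ (j, k) * (\<Sum>i<m. adj_mat M $$ (k, i) * A $$ (i, c)))"
    using Q A adj_mat(1)[OF M] j c by (simp add: scalar_prod_def atLeast0LessThan)
  finally show ?thesis using sum_adj_mat_mult_eq_det_replace_col[OF M] by simp
qed

subsection \<open>Popov forms\<close>

locale popov_form_of_matrix =
  fixes A P :: "'a::field poly mat" and s :: "nat \<Rightarrow> int" and m n :: nat
  assumes A_carrier: "A \<in> carrier_mat m n"
    and popov_form: "is_popov_form_of s P A"
begin

lemma P_carrier: "P \<in> carrier_mat m n"
  using popov_form A_carrier by (simp add: is_popov_form_of_def)

lemma dim_A [simp]: "dim_row A = m" "dim_col A = n"
  using A_carrier by auto

lemma dim_P [simp]: "dim_row P = m" "dim_col P = n"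
  using P_carrier by auto

lemma rowmod_P: "rowmod P = rowmod A"
  using popov_form by (simp add: is_popov_form_of_def)

definition pivot :: "nat \<Rightarrow> nat" where
  "pivot k = spiv s (row P k)"

definition pivot_degree :: "nat \<Rightarrow> nat" where
  "pivot_degree k = degree (P $$ (k, pivot k))"

lemma length_pivots [simp]: "length (pivots s P) = m"
  using P_carrier by (simp add: pivots_def)

lemma nth_pivots [simp]: "k < m \<Longrightarrow> pivots s P ! k = pivot k"
  using P_carrier by (simp add: pivots_def pivot_def)

lemma set_pivots: "set (pivots s P) = pivot ` {..<m}"
  using P_carrier by (auto simp: pivots_def pivot_def)

lemma row_P_nonzero: "k < m \<Longrightarrow> row P k \<noteq> 0\<^sub>v (dim_vec (row P k))"
  using popov_form P_carrier by (simp add: is_popov_form_of_def is_popov_def)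

lemma pivot_less: "k < m \<Longrightarrow> pivot k < n"
  using spiv_less[OF row_P_nonzero] P_carrier by (simp add: pivot_def)

lemma pivots_subset: "set (pivots s P) \<subseteq> {..<n}"
  using pivot_less by (auto simp: set_pivots)

lemma P_pivot_nonzero: "k < m \<Longrightarrow> P $$ (k, pivot k) \<noteq> 0"
  using spiv_nonzero[OF row_P_nonzero, of k s] pivot_less[of k] P_carrier by (simp add: pivot_def)

lemma shifted_degree_le_pivot:
  "k < m \<Longrightarrow> j < n \<Longrightarrow> P $$ (k, j) \<noteq> 0 \<Longrightarrow>
    int (degree (P $$ (k, j))) + s j \<le> int (pivot_degree k) + s (pivot k)"
  using shifted_degree_le_spiv[OF row_P_nonzero, of k j s] pivot_less[of k] P_carrier
  by (simp add: pivot_def pivot_degree_def)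

lemma shifted_degree_less_pivot:
  "k < m \<Longrightarrow> j < n \<Longrightarrow> pivot k < j \<Longrightarrow> P $$ (k, j) \<noteq> 0 \<Longrightarrow>
    int (degree (P $$ (k, j))) + s j < int (pivot_degree k) + s (pivot k)"
  using shifted_degree_less_spiv[OF row_P_nonzero, of k j s] pivot_less[of k] P_carrier
  by (simp add: pivot_def pivot_degree_def)

lemma pivot_strict_mono: "k < k' \<Longrightarrow> k' < m \<Longrightarrow> pivot k < pivot k'"
  using popov_form P_carrier by (simp add: is_popov_form_of_def is_popov_def pivot_def)

lemma inj_on_pivot: "inj_on pivot {..<m}"
  by (rule inj_onI) (metis lessThan_iff less_irrefl linorder_neqE_nat pivot_strict_mono)

lemma P_pivot_monic: "k < m \<Longrightarrow> lead_coeff (P $$ (k, pivot k)) = 1"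
  using popov_form P_carrier by (simp add: is_popov_form_of_def is_popov_def pivot_def)

lemma pdeg_pivot_column_less:
  "i < m \<Longrightarrow> k < m \<Longrightarrow> i \<noteq> k \<Longrightarrow> pdeg (P $$ (i, pivot k)) < pdeg (P $$ (k, pivot k))"
  using popov_form P_carrier by (simp add: is_popov_form_of_def is_popov_def pivot_def)

lemma degree_below_pivot_degree:
  "i < m \<Longrightarrow> k < m \<Longrightarrow> i \<noteq> k \<Longrightarrow> degree_below (pivot_degree k) (P $$ (i, pivot k))"
  using pdeg_pivot_column_less[of i k] P_pivot_nonzero[of k]
  by (cases "P $$ (i, pivot k) = 0") (auto simp: degree_below_def pivot_degree_def pdeg_nonzero)

lemma degree_pivot_column_le: "i < m \<Longrightarrow> k < m \<Longrightarrow> degree (P $$ (i, pivot k)) \<le> pivot_degree k"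
  using degree_below_pivot_degree[of i k]
  by (cases "i = k") (auto simp: degree_below_def pivot_degree_def)

abbreviation Api :: "'a poly mat" where
  "Api \<equiv> colsel A (pivots s P)"

abbreviation Ppi :: "'a poly mat" where
  "Ppi \<equiv> colsel P (pivots s P)"

lemma Api_carrier: "Api \<in> carrier_mat m m"
  using A_carrier colsel_carrier[of A "pivots s P"] by simp

lemma Ppi_carrier: "Ppi \<in> carrier_mat m m"
  using P_carrier colsel_carrier[of P "pivots s P"] by simp

lemma Api_index: "i < m \<Longrightarrow> k < m \<Longrightarrow> Api $$ (i, k) = A $$ (i, pivot k)"
  using A_carrier by simp

lemma Ppi_index: "i < m \<Longrightarrow> k < m \<Longrightarrow> Ppi $$ (i, k) = P $$ (i, pivot k)"
  using P_carrier by simp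

lemma colsel_pivots_mult:
  "X \<in> carrier_mat k m \<Longrightarrow> C \<in> carrier_mat m n \<Longrightarrow> colsel (X * C) (pivots s P) = X * colsel C (pivots s P)"
  using colsel_mult pivots_subset by blast

lemma det_Ppi: "det Ppi \<noteq> 0 \<and> degree (det Ppi) = (\<Sum>k = 0..<m. pivot_degree k)"
  by (rule det_diagonal_dominant[OF Ppi_carrier])
    (simp_all add: Ppi_index P_pivot_nonzero degree_below_pivot_degree flip: pivot_degree_def)

lemma unimodular_transformation:
  obtains U V where "U \<in> carrier_mat m m" "V \<in> carrier_mat m m" "U * V = 1\<^sub>m m" "V * U = 1\<^sub>m m"
    "U * A = P" "V * P = A"
proof -
  obtain U where U: "U \<in> carrier_mat m m" and UA: "U * A = P"
    using rowmod_subset_imp_factor[OF P_carrier A_carrier] rowmod_P by (metis order_refl)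
  obtain V where V: "V \<in> carrier_mat m m" and VP: "V * P = A"
    using rowmod_subset_imp_factor[OF A_carrier P_carrier] rowmod_P by (metis order_refl)
  have U_Api: "U * Api = Ppi"
    using colsel_pivots_mult[OF U A_carrier] UA by simp
  have V_Ppi: "V * Ppi = Api"
    using colsel_pivots_mult[OF V P_carrier] VP by simp
  have "det Ppi = det U * det Api"
    using det_mult[OF U Api_carrier] U_Api by simp
  then have det_Api: "det Api \<noteq> 0" using det_Ppi by auto
  have "U * V = 1\<^sub>m m"
  proof (rule mult_cancel_right_det[OF _ _ Ppi_carrier])
    have "U * V * Ppi = U * (V * Ppi)" using U V Ppi_carrier by (simp add: assoc_mult_mat[of _ m m _ m _ m])
    then show "U * V * Ppi = 1\<^sub>m m * Ppi" using U_Api V_Ppi left_mult_one_mat[OF Ppi_carrier] by simp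
  qed (use U V det_Ppi in auto)
  moreover have "V * U = 1\<^sub>m m"
  proof (rule mult_cancel_right_det[OF _ _ Api_carrier])
    have "V * U * Api = V * (U * Api)" using U V Api_carrier by (simp add: assoc_mult_mat[of _ m m _ m _ m])
    then show "V * U * Api = 1\<^sub>m m * Api" using U_Api V_Ppi left_mult_one_mat[OF Api_carrier] by simp
  qed (use U V det_Api in auto)
  ultimately show ?thesis using that U V UA VP by simp
qed

lemma det_Api: "det Api \<noteq> 0 \<and> degree (det Api) = (\<Sum>k = 0..<m. pivot_degree k)"
proof -
  obtain U V where U: "U \<in> carrier_mat m m" and V: "V \<in> carrier_mat m m"
    and "U * V = 1\<^sub>m m" and UA: "U * A = P"
    by (rule unimodular_transformation)
  then have unit: "det U * det V = 1" using det_mult[OF U V] by simp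
  then have "det U \<noteq> 0" "det V \<noteq> 0" by auto
  then have "degree (det U) = 0" using unit by (metis add_is_0 degree_1 degree_mult_eq)
  moreover have "det Ppi = det U * det Api"
    using det_mult[OF U Api_carrier] colsel_pivots_mult[OF U A_carrier] UA by simp
  ultimately show ?thesis using det_Ppi by (auto simp: degree_mult_eq)
qed

lemma left_factor_unique:
  assumes U: "U \<in> carrier_mat m m" and U': "U' \<in> carrier_mat m m" and "U * A = P" "U' * A = P"
  shows "U = U'"
proof (rule mult_cancel_right_det[OF U U' Api_carrier])
  show "det Api \<noteq> 0" using det_Api by simp
  show "U * Api = U' * Api"
    using colsel_pivots_mult[OF U A_carrier] colsel_pivots_mult[OF U' A_carrier] assms(3,4) by simp
qed

lemma spiv_row_Ppi:
  assumes k: "k < m"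
  shows "spiv (subshift s (pivots s P)) (row Ppi k) = k"
proof -
  have dim: "dim_vec (row Ppi k) = m" using Ppi_carrier by simp
  have entry: "row Ppi k $ l = P $$ (k, pivot l)" if "l < m" for l
    using k that dim Ppi_index by simp
  have shift: "subshift s (pivots s P) l = s (pivot l)" if "l < m" for l
    using that by (simp add: subshift_def)
  show ?thesis
  proof (rule spiv_eqI)
    show "k < dim_vec (row Ppi k)" "row Ppi k $ k \<noteq> 0"
      using k dim entry P_pivot_nonzero by simp_all
  next
    fix l assume "l < dim_vec (row Ppi k)" "row Ppi k $ l \<noteq> 0"
    then have l: "l < m" "P $$ (k, pivot l) \<noteq> 0" using dim entry by auto
    show "shifted_degree (subshift s (pivots s P)) (row Ppi k) l
        \<le> shifted_degree (subshift s (pivots s P)) (row Ppi k) k"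
      using shifted_degree_le_pivot[OF k pivot_less[OF l(1)] l(2)]
      by (simp add: entry shift k l(1) pivot_degree_def)
  next
    fix l assume "l < dim_vec (row Ppi k)" "k < l" "row Ppi k $ l \<noteq> 0"
    then have l: "l < m" "P $$ (k, pivot l) \<noteq> 0" "pivot k < pivot l"
      using dim entry pivot_strict_mono by auto
    show "shifted_degree (subshift s (pivots s P)) (row Ppi k) l
        < shifted_degree (subshift s (pivots s P)) (row Ppi k) k"
      using shifted_degree_less_pivot[OF k pivot_less[OF l(1)] l(3) l(2)]
      by (simp add: entry shift k l(1) pivot_degree_def)
  qed
qed

lemma Ppi_popov_form: "is_popov_form_of (subshift s (pivots s P)) Ppi Api"
proof -
  obtain U V where U: "U \<in> carrier_mat m m" and V: "V \<in> carrier_mat m m"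
    and "U * A = P" "V * P = A"
    by (rule unimodular_transformation)
  then have "Ppi = U * Api" "Api = V * Ppi"
    using colsel_pivots_mult[OF U A_carrier] colsel_pivots_mult[OF V P_carrier] by simp_all
  then have "rowmod Ppi = rowmod Api"
    using rowmod_mult_subset[OF U Api_carrier] rowmod_mult_subset[OF V Ppi_carrier] by auto
  moreover have "is_popov (subshift s (pivots s P)) Ppi"
    unfolding is_popov_def
  proof (intro conjI allI impI)
    fix k assume "k < dim_row Ppi"
    then have k: "k < m" using Ppi_carrier by simp
    show "row Ppi k \<noteq> 0\<^sub>v (dim_col Ppi)"
    proof
      assume "row Ppi k = 0\<^sub>v (dim_col Ppi)"
      then have "row Ppi k $ k = 0" using k Ppi_carrier by simp
      then show False using k Ppi_carrier P_pivot_nonzero by simp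
    qed
    show "lead_coeff (Ppi $$ (k, spiv (subshift s (pivots s P)) (row Ppi k))) = 1"
      using k Ppi_carrier by (simp add: spiv_row_Ppi P_pivot_monic)
  next
    fix i i' assume "i < i' \<and> i' < dim_row Ppi"
    then show "spiv (subshift s (pivots s P)) (row Ppi i) < spiv (subshift s (pivots s P)) (row Ppi i')"
      using Ppi_carrier by (simp add: spiv_row_Ppi)
  next
    fix k i' assume "k < dim_row Ppi" "i' < dim_row Ppi" "i' \<noteq> k"
    then show "pdeg (Ppi $$ (i', spiv (subshift s (pivots s P)) (row Ppi k)))
        < pdeg (Ppi $$ (k, spiv (subshift s (pivots s P)) (row Ppi k)))"
      using Ppi_carrier by (simp add: spiv_row_Ppi pdeg_pivot_column_less)
  qed
  ultimately show ?thesis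
    using Ppi_carrier Api_carrier by (simp add: is_popov_form_of_def)
qed

subsection \<open>Degree bounds\<close>

lemma pivot_shifted_degree_le_entry:
  assumes k: "k < m"
  obtains i j where "i < m" "j < n" "A $$ (i, j) \<noteq> 0"
    "int (pivot_degree k) + s (pivot k) \<le> int (degree (A $$ (i, j))) + s j"
proof -
  obtain U V where U: "U \<in> carrier_mat m m" and V: "V \<in> carrier_mat m m"
    and UV: "U * V = 1\<^sub>m m" and VP: "V * P = A"
    by (rule unimodular_transformation)
  have "(\<Sum>i = 0..<m. U $$ (k, i) * V $$ (i, k)) = 1"
    using arg_cong[OF UV, of "\<lambda>M. M $$ (k, k)"] U V k by (simp add: scalar_prod_def)
  then obtain i where i: "i < m" "V $$ (i, k) \<noteq> 0"
    by (metis (no_types, lifting) atLeastLessThan_iff mult_zero_right sum.neutral zero_neq_one)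
  have A_entry: "A $$ (i, j) = (\<Sum>l<m. V $$ (i, l) * P $$ (l, j))" if "j < n" for j
    using VP[symmetric] V i that by (simp add: scalar_prod_def atLeast0LessThan)
  obtain j where "j < n" "(\<Sum>l<m. V $$ (i, l) * P $$ (l, j)) \<noteq> 0"
    "int (degree (V $$ (i, k))) + (int (degree (P $$ (k, pivot k))) + s (pivot k))
       \<le> int (degree (\<Sum>l<m. V $$ (i, l) * P $$ (l, j))) + s j"
    by (rule predictable_degree[of m pivot n P s k "\<lambda>l. V $$ (i, l)"])
      (use pivot_less P_pivot_nonzero pivot_strict_mono k i
        shifted_degree_le_pivot[unfolded pivot_degree_def]
        shifted_degree_less_pivot[unfolded pivot_degree_def] in auto)
  then show ?thesis
    using that[of i j] i A_entry by (simp add: pivot_degree_def)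
qed

lemma mdeg_P_le_mdeg_A_amp: "mdeg P \<le> mdeg A + ereal (real_of_int (amp n s))"
proof (rule mdeg_least)
  fix k j' assume "k < dim_row P" "j' < dim_col P"
  then have k: "k < m" and j': "j' < n" by auto
  show "pdeg (P $$ (k, j')) \<le> mdeg A + ereal (real_of_int (amp n s))"
  proof (cases "P $$ (k, j') = 0")
    case False
    obtain i j where ij: "i < m" "j < n" "A $$ (i, j) \<noteq> 0"
      "int (pivot_degree k) + s (pivot k) \<le> int (degree (A $$ (i, j))) + s j"
      using pivot_shifted_degree_le_entry[OF k] by blast
    have "int (degree (P $$ (k, j'))) \<le> int (degree (A $$ (i, j))) + amp n s"
      using shifted_degree_le_pivot[OF k j' False] ij(4) diff_le_amp[OF ij(2) j', of s] by linarith
    then have "pdeg (P $$ (k, j')) \<le> pdeg (A $$ (i, j)) + ereal (real_of_int (amp n s))"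
      using False ij(3) by (simp add: pdeg_nonzero)
    also have "\<dots> \<le> mdeg A + ereal (real_of_int (amp n s))"
      by (rule add_right_mono, rule mdeg_upper) (use ij in auto)
    finally show ?thesis .
  qed simp
qed

lemma row_A_nonzero:
  assumes i: "i < m"
  shows "row A i \<noteq> 0\<^sub>v n"
proof
  assume zero: "row A i = 0\<^sub>v n"
  have "Api $$ (i, k) = 0" if "k < m" for k
  proof -
    have "row A i $ pivot k = 0" using zero pivot_less[OF that] by simp
    then show ?thesis using i that pivot_less[OF that] by (simp add: Api_index)
  qed
  then have "det Api = 0"
    by (simp add: laplace_expansion_row[OF Api_carrier i])
  then show False using det_Api by simp
qed

lemma col_A_pivot_nonzero:
  assumes k: "k < m"
  shows "col A (pivot k) \<noteq> 0\<^sub>v m"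
proof
  assume zero: "col A (pivot k) = 0\<^sub>v m"
  have "Api $$ (i, k) = 0" if "i < m" for i
  proof -
    have "col A (pivot k) $ i = 0" using zero that by simp
    then show ?thesis using k that pivot_less[OF k] by (simp add: Api_index)
  qed
  then have "det Api = 0"
    by (simp add: laplace_expansion_column[OF Api_carrier k])
  then show False using det_Api by simp
qed

lemma degree_Ppi_le: "j < m \<Longrightarrow> k < m \<Longrightarrow> degree (Ppi $$ (j, k)) \<le> (\<Sum>k = 0..<m. pivot_degree k)"
  using degree_pivot_column_le[of j k] member_le_sum[of k "{0..<m}" pivot_degree]
  by (simp add: Ppi_index)

lemma pivot_degree_sum_le_col_degrees:
  "(\<Sum>k = 0..<m. pivot_degree k) \<le> (\<Sum>k = 0..<m. vdegree (col A (pivot k)))"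
proof -
  have "degree (det Api) \<le> (\<Sum>k = 0..<m. vdegree (col A (pivot k)))"
  proof (rule degree_det_le_sum_cols[OF Api_carrier])
    fix i k assume "i < m" "k < m"
    then show "degree (Api $$ (i, k)) \<le> vdegree (col A (pivot k))"
      using degree_le_vdegree[of i "col A (pivot k)"] pivot_less by (simp add: Api_index)
  qed
  then show ?thesis using det_Api by simp
qed

lemma sum_pivot_col_degrees:
  "(\<Sum>k = 0..<m. vdegree (col A (pivot k))) = (\<Sum>c\<in>set (pivots s P). vdegree (col A c))"
  by (simp add: set_pivots sum.reindex[OF inj_on_pivot] atLeast0LessThan)

context
  fixes U :: "'a poly mat"
  assumes U_carrier: "U \<in> carrier_mat m m" and U_A: "U * A = P"
begin

lemma U_Api: "U * Api = Ppi"
  using colsel_pivots_mult[OF U_carrier A_carrier] U_A by simp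

lemma degree_U_entry:
  assumes j: "j < m" and i: "i < m" and nz: "U $$ (j, i) \<noteq> 0"
  shows "degree (det (replace_row i (\<lambda>k. Ppi $$ (j, k)) Api))
    = (\<Sum>k = 0..<m. pivot_degree k) + degree (U $$ (j, i))"
  using det_mult_left_factor_index[OF U_carrier Api_carrier U_Api j i] det_Api nz
  by (metis degree_mult_eq)

lemma degree_U_le_row_degrees:
  assumes j: "j < m" and i: "i < m"
  shows "degree (U $$ (j, i)) \<le> (\<Sum>l\<in>{0..<m} - {i}. vdegree (row A l))"
proof (cases "U $$ (j, i) = 0")
  case False
  let ?\<delta> = "\<Sum>k = 0..<m. pivot_degree k"
  have "degree (det (replace_row i (\<lambda>k. Ppi $$ (j, k)) Api))
      \<le> ?\<delta> + (\<Sum>l\<in>{0..<m} - {i}. vdegree (row A l))"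
  proof (rule degree_det_le[where f = "\<lambda>l _. if l = i then ?\<delta> else vdegree (row A l)"])
    fix l k assume "l < m" "k < m"
    then show "degree (replace_row i (\<lambda>k. Ppi $$ (j, k)) Api $$ (l, k))
        \<le> (if l = i then ?\<delta> else vdegree (row A l))"
      using degree_Ppi_le[OF j] degree_le_vdegree[of "pivot k" "row A l"] pivot_less[of k]
      by (simp add: replace_row_index[OF Api_carrier] Api_index)
  next
    fix p :: "nat \<Rightarrow> nat"
    show "(\<Sum>l = 0..<m. if l = i then ?\<delta> else vdegree (row A l))
        \<le> ?\<delta> + (\<Sum>l\<in>{0..<m} - {i}. vdegree (row A l))"
      using i by (simp add: sum.remove[of "{0..<m}" i])
  qed (simp add: Api_carrier)
  then show ?thesis using degree_U_entry[OF j i False] by simp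
qed simp

lemma degree_U_le_pivot_col_degrees:
  assumes j: "j < m" and i: "i < m"
  shows "degree (U $$ (j, i)) \<le> (\<Sum>k = 0..<m. vdegree (col A (pivot k)))"
proof (cases "U $$ (j, i) = 0")
  case False
  let ?\<delta> = "\<Sum>k = 0..<m. pivot_degree k"
  let ?c = "\<lambda>k. vdegree (col A (pivot k))"
  have "degree (det (replace_row i (\<lambda>k. Ppi $$ (j, k)) Api)) \<le> ?\<delta> + (\<Sum>k = 0..<m. ?c k)"
  proof (rule degree_det_le[where f = "\<lambda>l k. if l = i then ?\<delta> else ?c k"])
    fix l k assume "l < m" "k < m"
    then show "degree (replace_row i (\<lambda>k. Ppi $$ (j, k)) Api $$ (l, k)) \<le> (if l = i then ?\<delta> else ?c k)"
      using degree_Ppi_le[OF j] degree_le_vdegree[of l "col A (pivot k)"] pivot_less[of k]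
      by (simp add: replace_row_index[OF Api_carrier] Api_index)
  next
    fix p :: "nat \<Rightarrow> nat" assume p: "p permutes {0..<m}"
    have "(\<Sum>l = 0..<m. if l = i then ?\<delta> else ?c (p l)) \<le> (\<Sum>l = 0..<m. (if l = i then ?\<delta> else 0) + ?c (p l))"
      by (rule sum_mono) auto
    also have "\<dots> = ?\<delta> + (\<Sum>k = 0..<m. ?c k)"
      using i by (simp add: sum.distrib sum_permutes[OF p, of ?c])
    finally show "(\<Sum>l = 0..<m. if l = i then ?\<delta> else ?c (p l)) \<le> ?\<delta> + (\<Sum>k = 0..<m. ?c k)" .
  qed (simp add: Api_carrier)
  then show ?thesis using degree_U_entry[OF j i False] by simp
qed simp

lemma degree_P_le_row_degrees:
  assumes j: "j < m" and c: "c < n"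
  shows "degree (P $$ (j, c)) \<le> (\<Sum>l = 0..<m. vdegree (row A l))"
proof -
  have "P $$ (j, c) = (\<Sum>i<m. U $$ (j, i) * A $$ (i, c))"
    using U_A[symmetric] U_carrier j c by (simp add: scalar_prod_def atLeast0LessThan)
  also have "degree \<dots> \<le> (\<Sum>l = 0..<m. vdegree (row A l))"
  proof (rule degree_sum_le)
    fix i assume "i \<in> {..<m}"
    then have i: "i < m" by simp
    have "degree (U $$ (j, i) * A $$ (i, c)) \<le> degree (U $$ (j, i)) + degree (A $$ (i, c))"
      by (rule degree_mult_le)
    also have "\<dots> \<le> (\<Sum>l\<in>{0..<m} - {i}. vdegree (row A l)) + vdegree (row A i)"
      using degree_U_le_row_degrees[OF j i] degree_le_vdegree[of c "row A i"] i c by simp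
    also have "\<dots> = (\<Sum>l = 0..<m. vdegree (row A l))"
      using sum.remove[of "{0..<m}" i "\<lambda>l. vdegree (row A l)"] i by (simp add: add.commute)
    finally show "degree (U $$ (j, i) * A $$ (i, c)) \<le> (\<Sum>l = 0..<m. vdegree (row A l))" .
  qed simp
  finally show ?thesis .
qed

lemma degree_P_le_col_degrees:
  assumes j: "j < m" and c: "c < n"
  shows "degree (P $$ (j, c)) \<le> vdegree (col A c) + (\<Sum>k = 0..<m. vdegree (col A (pivot k)))"
proof -
  let ?\<delta> = "\<Sum>k = 0..<m. pivot_degree k"
  let ?c = "\<lambda>k. vdegree (col A (pivot k))"
  let ?N = "vdegree (col A c) + (\<Sum>k = 0..<m. ?c k)"
  have replaced: "degree (det (replace_col k (\<lambda>l. A $$ (l, c)) Api)) \<le> ?N" if k: "k < m" for k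
  proof -
    have "degree (det (replace_col k (\<lambda>l. A $$ (l, c)) Api))
        \<le> (\<Sum>q = 0..<m. if q = k then vdegree (col A c) else ?c q)"
    proof (rule degree_det_le_sum_cols)
      fix l q assume "l < m" "q < m"
      then show "degree (replace_col k (\<lambda>l. A $$ (l, c)) Api $$ (l, q))
          \<le> (if q = k then vdegree (col A c) else ?c q)"
        using degree_le_vdegree[of l "col A c"] degree_le_vdegree[of l "col A (pivot q)"] pivot_less[of q] c
        by (simp add: replace_col_index[OF Api_carrier] Api_index)
    qed (simp add: Api_carrier)
    also have "\<dots> \<le> (\<Sum>q = 0..<m. (if q = k then vdegree (col A c) else 0) + ?c q)"
      by (rule sum_mono) auto
    also have "\<dots> = ?N" using k by (simp add: sum.distrib)
    finally show ?thesis .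
  qed
  have "det Api * P $$ (j, c) = (\<Sum>k<m. Ppi $$ (j, k) * det (replace_col k (\<lambda>l. A $$ (l, c)) Api))"
    using det_mult_product_index[OF U_carrier Api_carrier U_Api A_carrier j c] U_A by simp
  then have "degree (det Api * P $$ (j, c)) \<le> ?\<delta> + ?N"
  proof (simp only:)
    show "degree (\<Sum>k<m. Ppi $$ (j, k) * det (replace_col k (\<lambda>l. A $$ (l, c)) Api)) \<le> ?\<delta> + ?N"
  proof (rule degree_sum_le)
    fix k assume "k \<in> {..<m}"
    then have k: "k < m" by simp
    have "degree (Ppi $$ (j, k) * det (replace_col k (\<lambda>l. A $$ (l, c)) Api))
        \<le> degree (Ppi $$ (j, k)) + degree (det (replace_col k (\<lambda>l. A $$ (l, c)) Api))"
      by (rule degree_mult_le)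
    also have "\<dots> \<le> ?\<delta> + ?N" using degree_Ppi_le[OF j k] replaced[OF k] by simp
    finally show "degree (Ppi $$ (j, k) * det (replace_col k (\<lambda>l. A $$ (l, c)) Api)) \<le> ?\<delta> + ?N" .
  qed simp
  qed
  then show ?thesis
    using det_Api by (cases "P $$ (j, c) = 0") (simp_all add: degree_mult_eq)
qed

lemma degree_P_le_nonzero_col_degrees:
  assumes j: "j < m" and c: "c < n"
  shows "degree (P $$ (j, c)) \<le> (\<Sum>c' | c' < n \<and> col A c' \<noteq> 0\<^sub>v m. vdegree (col A c'))"
proof -
  let ?NZ = "{c'. c' < n \<and> col A c' \<noteq> 0\<^sub>v m}"
  have fin: "finite ?NZ" by simp
  have pivots_NZ: "set (pivots s P) \<subseteq> ?NZ"
    using pivot_less col_A_pivot_nonzero by (auto simp: set_pivots)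
  have pivots_le: "(\<Sum>k = 0..<m. vdegree (col A (pivot k))) \<le> (\<Sum>c'\<in>?NZ. vdegree (col A c'))"
    unfolding sum_pivot_col_degrees by (rule sum_mono2[OF fin pivots_NZ]) simp
  consider (pivot) k where "k < m" "c = pivot k" | (zero) "col A c = 0\<^sub>v m"
    | (other) "c \<notin> set (pivots s P)" "c \<in> ?NZ"
    using c by (auto simp: set_pivots)
  then show ?thesis
  proof cases
    case pivot
    then show ?thesis
      using degree_pivot_column_le[OF j pivot(1)] member_le_sum[of k "{0..<m}" pivot_degree]
        pivot_degree_sum_le_col_degrees pivots_le by simp
  next
    case zero
    have "P $$ (j, c) = (\<Sum>i<m. U $$ (j, i) * A $$ (i, c))"
      using U_A[symmetric] U_carrier j c by (simp add: scalar_prod_def atLeast0LessThan)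
    also have "\<dots> = 0"
    proof (intro sum.neutral ballI)
      fix i assume "i \<in> {..<m}"
      then have "A $$ (i, c) = col A c $ i" using c by simp
      then show "U $$ (j, i) * A $$ (i, c) = 0" using zero \<open>i \<in> {..<m}\<close> by simp
    qed
    finally show ?thesis by simp
  next
    case other
    have "vdegree (col A c) + (\<Sum>k = 0..<m. vdegree (col A (pivot k)))
        = (\<Sum>c'\<in>insert c (set (pivots s P)). vdegree (col A c'))"
      using other(1) by (simp add: sum_pivot_col_degrees)
    also have "\<dots> \<le> (\<Sum>c'\<in>?NZ. vdegree (col A c'))"
      by (rule sum_mono2[OF fin]) (use pivots_NZ other in auto)
    finally show ?thesis using degree_P_le_col_degrees[OF j c] by simp
  qed
qed

lemma vdeg_col_U_le: "i < m \<Longrightarrow> vdeg (col U i) \<le> sum_rdeg A - vdeg (row A i)"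
proof -
  assume i: "i < m"
  let ?r = "\<lambda>l. vdegree (row A l)"
  have "vdeg (col U i) \<le> ereal (real (\<Sum>l\<in>{0..<m} - {i}. ?r l))"
    by (rule vdeg_le_nat) (use U_carrier degree_U_le_row_degrees i in simp)
  also have "\<dots> = sum_rdeg A - vdeg (row A i)"
  proof -
    have "(\<Sum>l<m. ?r l) = ?r i + (\<Sum>l\<in>{0..<m} - {i}. ?r l)"
      using sum.remove[of "{0..<m}" i ?r] i by (simp add: atLeast0LessThan)
    moreover have "vdeg (row A i) = ereal (real (?r i))"
      using vdeg_eq_vdegree[of "row A i"] row_A_nonzero[OF i] by simp
    ultimately show ?thesis
      using sum_rdeg_eq[OF A_carrier row_A_nonzero] by simp
  qed
  finally show ?thesis .
qed

lemma mdeg_U_le: "mdeg U \<le> sum_cdeg Api"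
proof -
  have col_Api: "col Api q = col A (pivot q)" if "q < m" for q
    using col_colsel[of q "pivots s P" A] pivot_less that by simp
  have "sum_cdeg Api = ereal (real (\<Sum>q<m. vdegree (col Api q)))"
    by (rule sum_cdeg_eq[OF Api_carrier]) (simp add: col_Api col_A_pivot_nonzero)
  also have "(\<Sum>q<m. vdegree (col Api q)) = (\<Sum>k = 0..<m. vdegree (col A (pivot k)))"
    by (simp add: col_Api atLeast0LessThan)
  finally have "sum_cdeg Api = ereal (real (\<Sum>k = 0..<m. vdegree (col A (pivot k))))" .
  then show ?thesis
    by (simp only:) (rule mdeg_le_nat, use U_carrier degree_U_le_pivot_col_degrees in simp)
qed

end

lemma mdeg_P_le_sum_rdeg: "mdeg P \<le> sum_rdeg A"
proof -
  obtain U where "U \<in> carrier_mat m m" "U * A = P"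
    by (metis unimodular_transformation)
  then have "mdeg P \<le> ereal (real (\<Sum>l = 0..<m. vdegree (row A l)))"
    by (intro mdeg_le_nat) (simp add: degree_P_le_row_degrees)
  then show ?thesis
    using sum_rdeg_eq[OF A_carrier row_A_nonzero] by (simp add: atLeast0LessThan)
qed

lemma mdeg_P_le_sum_cdeg_nonzero_cols: "mdeg P \<le> sum_cdeg (nonzero_cols A)"
proof -
  obtain U where "U \<in> carrier_mat m m" "U * A = P"
    by (metis unimodular_transformation)
  then show ?thesis
    unfolding sum_cdeg_nonzero_cols[OF A_carrier]
    by (intro mdeg_le_nat) (simp add: degree_P_le_nonzero_col_degrees)
qed

end

theorem lemma5p1:
  fixes A P :: "'a::field poly mat" and s :: "nat \<Rightarrow> int" and m n :: nat
  assumes A: "A \<in> carrier_mat m n" and mn: "m \<le> n" and rk: "full_row_rank A"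
    and P: "is_popov_form_of s P A"
  defines "\<pi> \<equiv> pivots s P"
  shows "det (colsel A \<pi>) \<noteq> 0 \<and>
         is_popov_form_of (subshift s \<pi>) (colsel P \<pi>) (colsel A \<pi>) \<and>
         (\<exists>U. U \<in> carrier_mat m m \<and> U * colsel A \<pi> = colsel P \<pi> \<and>
              unimodular U \<and> U * A = P \<and>
              (\<forall>V. V \<in> carrier_mat m m \<and> unimodular V \<and> V * A = P \<longrightarrow> V = U) \<and>
              (\<forall>i < m. vdeg (col U i) \<le> sum_rdeg A - vdeg (row A i)) \<and>
              mdeg U \<le> sum_cdeg (colsel A \<pi>)) \<and>
         mdeg P \<le> mdeg A + ereal (real_of_int (amp n s)) \<and>
         mdeg P \<le> min (sum_rdeg A) (sum_cdeg (nonzero_cols A)) \<and>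
         min (sum_rdeg A) (sum_cdeg (nonzero_cols A)) \<le> ereal (real m) * mdeg A"
proof -
  interpret popov_form_of_matrix A P s m n
    using A P by unfold_locales
  obtain U V where U: "U \<in> carrier_mat m m" and V: "V \<in> carrier_mat m m"
    and "U * V = 1\<^sub>m m" "V * U = 1\<^sub>m m" and UA: "U * A = P"
    by (metis unimodular_transformation)
  then have "unimodular U"
    unfolding unimodular_def by (intro bexI[of _ V]) auto
  moreover have "\<forall>V. V \<in> carrier_mat m m \<and> unimodular V \<and> V * A = P \<longrightarrow> V = U"
    using left_factor_unique[OF _ U _ UA] by blast
  moreover have "mdeg P \<le> min (sum_rdeg A) (sum_cdeg (nonzero_cols A))"
    using mdeg_P_le_sum_rdeg mdeg_P_le_sum_cdeg_nonzero_cols by simp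
  moreover have "min (sum_rdeg A) (sum_cdeg (nonzero_cols A)) \<le> ereal (real m) * mdeg A"
    using sum_rdeg_le_mult_mdeg[OF A row_A_nonzero] by (simp add: min.coboundedI1)
  ultimately show ?thesis
    unfolding \<pi>_def
    using det_Api Ppi_popov_form U U_Api[OF U UA] UA vdeg_col_U_le[OF U UA] mdeg_U_le[OF U UA]
      mdeg_P_le_mdeg_A_amp
    by blast
qed

end
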